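(* Let $n,r$ be integers with $n\ge r+2\ge 2$. For every $g\in K$ there exists a unique element $w_g\in F(X)$ representing $g$ that decomposes as $w_g=w_g^\Delta\cdot w_g^{(1)}\cdot w_g^{(2)}\cdots w_g^{(n-1)}$ with $w_g^{(i)}\in F(X^{(i)})$ for $i\in\{1,\dots,n-1\}$ and $w_g^\Delta\in[F(\Delta),F(\Delta)]$. Moreover, for $1\le i\le n-1$, the element $w_g^{(i)}(a^{(i)}_1,\dots,a^{(i)}_r)\in F^{(i)}$, obtained by substituting $a^{(i)}_j$ for $x^{(i)}_j$, equals the projection of $g$ to the factor $F^{(i)}$.
   Context: For $\alpha\in\{1,\dots,n\}$ let $F^{(\alpha)}$ be the free group on $a^{(\alpha)}_1,\dots,a^{(\alpha)}_r$, let $\psi\colon F^{(1)}\times\cdots\times F^{(n)}\to\mathbb Z^r$ send each $a^{(\alpha)}_j$ to the standard basis vector $e_j$, and $K=\ker\psi$. For $\alpha\in\{1,\dots,n-1\}$, $j\in\{1,\dots,r\}$ set $x^{(\alpha)}_j=a^{(\alpha)}_j(a^{(n)}_j)^{-1}\in K$; $X^{(\alpha)}=(x^{(\alpha)}_1,\dots,x^{(\alpha)}_r)$, $X$ the set of all $x^{(\alpha)}_j$, $\Delta=(x^{(1)}_1,x^{(2)}_2,\dots,x^{(r)}_r)$. $F(X)$, $F(X^{(\alpha)})$, $F(\Delta)$ are the abstract free groups on these letters, with $F(X^{(\alpha)}),F(\Delta)\le F(X)$, and "represents" refers to the natural map $F(X)\to K$. $[\cdot,\cdot]$ denotes the commutator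 subgroup. *)

theory Defs
  imports "HOL-Algebra.Algebra"
begin

text \<open>A letter is a pair (e, x): (False, x) stands for the generator x and
  (True, x) for its inverse.\<close>

type_synonym 'a word = "(bool \<times> 'a) list"

fun cons_red :: "bool \<times> 'a \<Rightarrow> 'a word \<Rightarrow> 'a word" where
  "cons_red a [] = [a]"
| "cons_red a (b # bs) =
     (if fst a \<noteq> fst b \<and> snd a = snd b then bs else a # b # bs)"

definition reduce :: "'a word \<Rightarrow> 'a word" where
  "reduce w = foldr cons_red w []"

fun reduced :: "'a word \<Rightarrow> bool" where
  "reduced [] = True"
| "reduced [a] = True"
| "reduced (a # b # w) =
     (\<not> (fst a \<noteq> fst b \<and> snd a = snd b) \<and> reduced (b # w))"

definition free_grp :: "'a set \<Rightarrow> 'a word monoid" where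
  "free_grp S = \<lparr> carrier = {w. reduced w \<and> snd ` set w \<subseteq> S},
                   monoid.mult = (\<lambda>u v. reduce (u @ v)),
                   monoid.one = [] \<rparr>"

definition ord_prod :: "('a, 'b) monoid_scheme \<Rightarrow> 'a list \<Rightarrow> 'a" where
  "ord_prod G xs = foldr (\<lambda>x y. x \<otimes>\<^bsub>G\<^esub> y) xs \<one>\<^bsub>G\<^esub>"

text \<open>Elements of F^(1) x ... x F^(n) are represented by functions
  g :: nat => nat word, g alpha being the component in F^(alpha)
  (a reduced word in the generators a^(alpha)_j, j in {1..r}, encoded as j),
  with g alpha = [] for alpha outside {1..n}.\<close>

definition prod_elem :: "nat \<Rightarrow> nat \<Rightarrow> (nat \<Rightarrow> nat word) \<Rightarrow> bool" where
  "prod_elem n r g \<longleftrightarrow>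
     (\<forall>\<alpha>\<in>{1..n}. g \<alpha> \<in> carrier (free_grp {1..r})) \<and> (\<forall>\<alpha>. \<alpha> \<notin> {1..n} \<longrightarrow> g \<alpha> = [])"

definition exp_sum :: "'a \<Rightarrow> 'a word \<Rightarrow> int" where
  "exp_sum j w = (\<Sum>a\<leftarrow>w. if snd a = j then (if fst a then -1 else 1) else 0)"

text \<open>psi sends a^(alpha)_j to e_j; the j-th coordinate of psi(g).\<close>

definition psi :: "nat \<Rightarrow> (nat \<Rightarrow> nat word) \<Rightarrow> nat \<Rightarrow> int" where
  "psi n g j = (\<Sum>\<alpha>\<in>{1..n}. exp_sum j (g \<alpha>))"

definition K_set :: "nat \<Rightarrow> nat \<Rightarrow> (nat \<Rightarrow> nat word) set" where
  "K_set n r = {g. prod_elem n r g \<and> (\<forall>j\<in>{1..r}. psi n g j = 0)}"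

text \<open>Generators of F(X): x^(alpha)_j is encoded as the pair (alpha, j).\<close>

definition X_set :: "nat \<Rightarrow> nat \<Rightarrow> (nat \<times> nat) set" where
  "X_set n r = {1..n-1} \<times> {1..r}"

definition X_alpha :: "nat \<Rightarrow> nat \<Rightarrow> (nat \<times> nat) set" where
  "X_alpha r \<alpha> = {\<alpha>} \<times> {1..r}"

definition Delta_set :: "nat \<Rightarrow> (nat \<times> nat) set" where
  "Delta_set r = (\<lambda>i. (i, i)) ` {1..r}"

definition FX :: "nat \<Rightarrow> nat \<Rightarrow> (nat \<times> nat) word monoid" where
  "FX n r = free_grp (X_set n r)"

text \<open>The natural map F(X) -> K, x^(alpha)_j |-> a^(alpha)_j (a^(n)_j)^(-1),
  computed componentwise: the beta-component of the image of a word is the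
  free reduction of the concatenation of the beta-components of the letters.\<close>

definition letter_comp :: "nat \<Rightarrow> nat \<Rightarrow> bool \<times> (nat \<times> nat) \<Rightarrow> nat word" where
  "letter_comp n \<beta> l =
     (case l of (e, (\<alpha>, j)) \<Rightarrow>
        if \<beta> = \<alpha> then [(e, j)] else if \<beta> = n then [(\<not> e, j)] else [])"

definition nat_map :: "nat \<Rightarrow> (nat \<times> nat) word \<Rightarrow> (nat \<Rightarrow> nat word)" where
  "nat_map n w = (\<lambda>\<beta>. reduce (concat (map (letter_comp n \<beta>) w)))"

definition subst_a :: "(nat \<times> nat) word \<Rightarrow> nat word" where
  "subst_a w = map (\<lambda>(e, (\<alpha>, j)). (e, j)) w"

end

theory Submission
  imports Defs
begin

(*
  A letter x\<^sup>(\<alpha>)\<^sub>j contributes a\<^sup>(\<alpha>)\<^sub>j to the \<alpha>-th component of its image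
  in K and (a\<^sup>(n)\<^sub>j)\<inverse> to the n-th one. So for w = w\<^sup>\<Delta> w\<^sup>(1) \<cdots> w\<^sup>(n-1)
  the i-th component (i < n) is w\<^sup>(i)(a\<^sup>(i)) preceded by the letters x\<^sup>(i)\<^sub>i of
  w\<^sup>\<Delta>, and these cancel because an element of [F(\<Delta>), F(\<Delta>)] has exponent sum zero in
  every generator; the n-th component is the image of the whole word under
  x\<^sup>(\<alpha>)\<^sub>j \<mapsto> (a\<^sup>(n)\<^sub>j)\<inverse>, which is injective on F(\<Delta>). Hence the first n - 1
  components of g determine the w\<^sup>(i), and then the last one determines w\<^sup>\<Delta>.
  Conversely, put w\<^sup>(i) = g\<^sub>i(x\<^sup>(i)) and let w\<^sup>\<Delta> correct the n-th component:
  \<psi>(g) = 0 says that w\<^sup>\<Delta> has zero exponent sums, and such a word lies in the commutator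
  subgroup, since it factors as a commutator times a shorter word of the same kind.
*)

section \<open>Free reduction\<close>

definition inv_letter :: "bool \<times> 'a \<Rightarrow> bool \<times> 'a" where
  "inv_letter a = (\<not> fst a, snd a)"

definition inv_word :: "'a word \<Rightarrow> 'a word" where
  "inv_word w = rev (map inv_letter w)"

lemma inv_letter_inv_letter [simp]: "inv_letter (inv_letter a) = a"
  by (simp add: inv_letter_def)

lemma inv_letter_neq [simp]: "inv_letter a \<noteq> a"
  by (simp add: inv_letter_def prod_eq_iff)

lemma snd_inv_letter [simp]: "snd (inv_letter a) = snd a"
  by (simp add: inv_letter_def)

lemma inv_word_Nil [simp]: "inv_word [] = []"
  and inv_word_Cons [simp]: "inv_word (a # w) = inv_word w @ [inv_letter a]"
  and inv_word_append [simp]: "inv_word (u @ v) = inv_word v @ inv_word u"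
  and inv_word_inv_word [simp]: "inv_word (inv_word w) = w"
  by (simp_all add: inv_word_def rev_map comp_def)

lemma snd_set_inv_word [simp]: "snd ` set (inv_word w) = snd ` set w"
  by (simp add: inv_word_def image_image)

lemma cons_red_Cons: "cons_red a (b # w) = (if b = inv_letter a then w else a # b # w)"
  by (auto simp: inv_letter_def)

lemma reduced_Cons_Cons: "reduced (a # b # w) \<longleftrightarrow> b \<noteq> inv_letter a \<and> reduced (b # w)"
  by (auto simp: inv_letter_def prod_eq_iff)

declare cons_red.simps(2) [simp del] reduced.simps(3) [simp del]

lemma reduced_ConsD: "reduced (a # w) \<Longrightarrow> reduced w"
  by (cases w) (auto simp: reduced_Cons_Cons)

lemma reduced_cons_red: "reduced w \<Longrightarrow> reduced (cons_red a w)"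
  by (cases w) (auto simp: cons_red_Cons reduced_Cons_Cons dest: reduced_ConsD)

lemma cons_red_inv_letter_cancel:
  "reduced w \<Longrightarrow> cons_red (inv_letter a) (cons_red a w) = w"
  by (cases w rule: reduced.cases) (auto simp: cons_red_Cons reduced_Cons_Cons)

lemma inj_inv_letter: "inj inv_letter"
  by (metis injI inv_letter_inv_letter)

lemma reduced_map_inv_letter [simp]: "reduced (map inv_letter w) \<longleftrightarrow> reduced w"
  by (induction w rule: reduced.induct) (auto simp: reduced_Cons_Cons inv_letter_def prod_eq_iff)

lemma reduce_Nil [simp]: "reduce [] = []"
  and reduce_Cons: "reduce (a # w) = cons_red a (reduce w)"
  by (simp_all add: reduce_def)

lemma reduced_reduce [simp]: "reduced (reduce w)"
  by (induction w) (simp_all add: reduce_Cons reduced_cons_red)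

lemma reduce_reduced: "reduced w \<Longrightarrow> reduce w = w"
proof (induction w rule: reduced.induct)
  case (3 a b w)
  then show ?case
    by (simp add: reduce_Cons cons_red_Cons reduced_Cons_Cons)
qed (simp_all add: reduce_Cons)

lemma reduce_reduce [simp]: "reduce (reduce w) = reduce w"
  by (simp add: reduce_reduced)

lemma reduce_append_reduce_right [simp]: "reduce (u @ reduce v) = reduce (u @ v)"
  by (induction u) (simp_all add: reduce_Cons)

lemma reduce_cons_red_append: "reduce (cons_red a u @ v) = reduce (a # u @ v)"
proof (cases u)
  case (Cons b u')
  have "cons_red a (cons_red (inv_letter a) t) = t" if "reduced t" for t
    using cons_red_inv_letter_cancel[OF that, of "inv_letter a"] by simp
  then show ?thesis
    using Cons by (simp add: cons_red_Cons reduce_Cons)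
qed (simp add: reduce_Cons)

lemma reduce_Cons_reduce [simp]: "reduce (a # reduce w) = reduce (a # w)"
  by (simp add: reduce_Cons)

lemma reduce_append_reduce_left [simp]: "reduce (reduce u @ v) = reduce (u @ v)"
  by (induction u) (simp_all add: reduce_Cons reduce_cons_red_append)

lemma reduce_inv_word_cancel_left [simp]: "reduce (inv_word u @ u @ v) = reduce v"
proof (induction u arbitrary: v)
  case (Cons a u)
  have "reduce (inv_letter a # a # v') = reduce v'" for v'
    using cons_red_inv_letter_cancel[of "reduce v'" a] by (simp add: reduce_Cons)
  then have "reduce (inv_word u @ inv_letter a # a # u @ v) = reduce (inv_word u @ u @ v)"
    by (metis reduce_append_reduce_right)
  then show ?case
    using Cons.IH by simp
qed simp

lemma reduce_inv_word_cancel_right [simp]: "reduce (u @ inv_word u @ v) = reduce v"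
  using reduce_inv_word_cancel_left[of "inv_word u" v] by simp

lemma reduce_inv_word_append [simp]: "reduce (inv_word u @ u) = []"
  using reduce_inv_word_cancel_left[of u "[]"] by simp

lemma reduce_append_inv_word [simp]: "reduce (u @ inv_word u) = []"
  using reduce_inv_word_cancel_right[of u "[]"] by simp

lemma reduce_append_inv_word_cancel [simp]: "reduce (u @ inv_word v @ v) = reduce u"
  using reduce_append_reduce_right[of u "inv_word v @ v"] by simp

lemma reduce_inv_word_reduce [simp]: "reduce (inv_word (reduce u)) = reduce (inv_word u)"
  by (metis append_Nil2 reduce_append_inv_word reduce_append_reduce_left
      reduce_append_reduce_right reduce_inv_word_cancel_left)

lemma reduce_append_cancel_right:
  assumes "reduce (u @ w) = reduce (v @ w)"
  shows "reduce u = reduce v"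
proof -
  have "reduce (x @ w @ inv_word w) = reduce x" for x
    using reduce_append_reduce_right[of x "w @ inv_word w"] by simp
  then show ?thesis
    using assms by (metis append_assoc reduce_append_reduce_left)
qed

lemma set_reduce_subset: "set (reduce w) \<subseteq> set w"
proof (induction w)
  case (Cons a w)
  have "set (cons_red a t) \<subseteq> insert a (set t)" for t
    by (cases t) (auto simp: cons_red_Cons)
  then show ?case
    using Cons.IH by (fastforce simp: reduce_Cons)
qed simp

lemma carrier_free_grp: "w \<in> carrier (free_grp S) \<longleftrightarrow> reduced w \<and> snd ` set w \<subseteq> S"
  by (simp add: free_grp_def)

lemma free_grp_mult [simp]: "u \<otimes>\<^bsub>free_grp S\<^esub> v = reduce (u @ v)"
  and free_grp_one [simp]: "\<one>\<^bsub>free_grp S\<^esub> = []"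
  by (simp_all add: free_grp_def)

lemma reduce_in_carrier_free_grp: "snd ` set w \<subseteq> S \<Longrightarrow> reduce w \<in> carrier (free_grp S)"
  using set_reduce_subset[of w] by (auto simp: carrier_free_grp)

lemma group_free_grp: "group (free_grp S)"
proof (rule groupI)
  fix u v
  assume "u \<in> carrier (free_grp S)" "v \<in> carrier (free_grp S)"
  then show "u \<otimes>\<^bsub>free_grp S\<^esub> v \<in> carrier (free_grp S)"
    unfolding free_grp_mult by (intro reduce_in_carrier_free_grp) (auto simp: carrier_free_grp)
next
  fix u assume u: "u \<in> carrier (free_grp S)"
  then show "\<one>\<^bsub>free_grp S\<^esub> \<otimes>\<^bsub>free_grp S\<^esub> u = u"
    by (simp add: carrier_free_grp reduce_reduced)
  have "reduce (inv_word u) \<in> carrier (free_grp S)"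
    using u by (intro reduce_in_carrier_free_grp) (simp add: carrier_free_grp)
  then show "\<exists>v\<in>carrier (free_grp S). v \<otimes>\<^bsub>free_grp S\<^esub> u = \<one>\<^bsub>free_grp S\<^esub>"
    by force
qed (simp_all add: carrier_free_grp)

lemma inv_free_grp:
  assumes "w \<in> carrier (free_grp S)"
  shows "inv\<^bsub>free_grp S\<^esub> w = reduce (inv_word w)"
proof (rule group.inv_equality[OF group_free_grp])
  show "reduce (inv_word w) \<in> carrier (free_grp S)"
    using assms by (intro reduce_in_carrier_free_grp) (simp add: carrier_free_grp)
qed (simp_all add: assms)

lemma ord_prod_free_grp: "ord_prod (free_grp S) ws = reduce (concat ws)"
  by (induction ws) (simp_all add: ord_prod_def)

lemma carrier_free_grp_mono: "T \<subseteq> S \<Longrightarrow> carrier (free_grp T) \<subseteq> carrier (free_grp S)"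
  by (force simp: carrier_free_grp)

section \<open>Exponent sums and the commutator subgroup\<close>

lemma exp_sum_Nil [simp]: "exp_sum c [] = 0"
  and exp_sum_Cons [simp]:
    "exp_sum c (a # w) = (if snd a = c then if fst a then -1 else 1 else 0) + exp_sum c w"
  and exp_sum_append [simp]: "exp_sum c (u @ v) = exp_sum c u + exp_sum c v"
  by (simp_all add: exp_sum_def)

lemma exp_sum_reduce [simp]: "exp_sum c (reduce w) = exp_sum c w"
proof (induction w)
  case (Cons a w)
  have "exp_sum c (cons_red a t) = exp_sum c [a] + exp_sum c t" for t
    by (cases t) (auto simp: cons_red_Cons inv_letter_def)
  then show ?case
    using Cons.IH by (simp add: reduce_Cons)
qed simp

lemma exp_sum_map_inv_letter [simp]: "exp_sum c (map inv_letter w) = - exp_sum c w"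
  by (induction w) (auto simp: inv_letter_def)

lemma exp_sum_inv_word [simp]: "exp_sum c (inv_word w) = - exp_sum c w"
  by (induction w) (auto simp: inv_letter_def)

lemma exp_sum_concat: "exp_sum c (concat ws) = (\<Sum>w\<leftarrow>ws. exp_sum c w)"
  by (induction ws) auto

lemma exp_sum_eq_0_if_notin: "c \<notin> snd ` set w \<Longrightarrow> exp_sum c w = 0"
  by (induction w) auto

lemma exp_sum_filter: "\<forall>a\<in>set w. snd a = c \<longrightarrow> P a \<Longrightarrow> exp_sum c (filter P w) = exp_sum c w"
  by (induction w) auto

lemma exp_sum_Cons_neq_0:
  assumes "inv_letter a \<notin> set w"
  shows "exp_sum (snd a) (a # w) \<noteq> 0"
proof -
  have "0 \<le> (if fst a then - exp_sum (snd a) w else exp_sum (snd a) w)"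
    using assms by (induction w) (auto simp: inv_letter_def prod_eq_iff)
  then show ?thesis
    by (auto split: if_splits)
qed

lemma reduced_single_generator: "reduced (a # w) \<Longrightarrow> snd ` set w \<subseteq> {snd a} \<Longrightarrow> set w \<subseteq> {a}"
proof (induction w arbitrary: a)
  case (Cons b w)
  then have "b = a"
    by (auto simp: reduced_Cons_Cons inv_letter_def prod_eq_iff)
  moreover have "set w \<subseteq> {b}"
    using Cons.IH[of b] Cons.prems reduced_ConsD[of a "b # w"] by auto
  ultimately show ?case
    by simp
qed simp

lemma reduce_eq_Nil_single_generator:
  assumes "snd ` set w \<subseteq> {c}" and "exp_sum c w = 0"
  shows "reduce w = []"
proof (cases "reduce w")
  case (Cons a v)
  have "snd ` set (a # v) \<subseteq> {c}"
    using assms(1) set_reduce_subset[of w] Cons by auto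
  then have "snd a = c" "set v \<subseteq> {a}"
    using reduced_single_generator[of a v] reduced_reduce[of w] Cons by auto
  then have "exp_sum c (a # v) \<noteq> 0"
    using exp_sum_Cons_neq_0[of a v] inv_letter_neq[of a] by blast
  then show ?thesis
    using assms(2) Cons exp_sum_reduce[of c w] by simp
qed

lemma subgroup_exp_sum_eq_0:
  assumes "T \<subseteq> S"
  shows "subgroup {w \<in> carrier (free_grp T). \<forall>c. exp_sum c w = 0} (free_grp S)"
proof (rule group.subgroupI[OF group_free_grp])
  fix u v
  assume u: "u \<in> {w \<in> carrier (free_grp T). \<forall>c. exp_sum c w = 0}"
    and v: "v \<in> {w \<in> carrier (free_grp T). \<forall>c. exp_sum c w = 0}"
  have "inv\<^bsub>free_grp S\<^esub> u = reduce (inv_word u)"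
    using u carrier_free_grp_mono[OF assms] by (auto intro: inv_free_grp)
  moreover have "reduce (inv_word u) \<in> carrier (free_grp T)"
    using u by (intro reduce_in_carrier_free_grp) (simp add: carrier_free_grp)
  ultimately show "inv\<^bsub>free_grp S\<^esub> u \<in> {w \<in> carrier (free_grp T). \<forall>c. exp_sum c w = 0}"
    using u by simp
  have "reduce (u @ v) \<in> carrier (free_grp T)"
    using u v by (intro reduce_in_carrier_free_grp) (auto simp: carrier_free_grp)
  then show "u \<otimes>\<^bsub>free_grp S\<^esub> v \<in> {w \<in> carrier (free_grp T). \<forall>c. exp_sum c w = 0}"
    using u v by simp
next
  show "{w \<in> carrier (free_grp T). \<forall>c. exp_sum c w = 0} \<subseteq> carrier (free_grp S)"
    using carrier_free_grp_mono[OF assms] by blast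
  have "[] \<in> {w \<in> carrier (free_grp T). \<forall>c. exp_sum c w = 0}"
    by (simp add: carrier_free_grp)
  then show "{w \<in> carrier (free_grp T). \<forall>c. exp_sum c w = 0} \<noteq> {}"
    by blast
qed

lemma derived_free_grp_subset:
  assumes "T \<subseteq> S"
  shows "derived (free_grp S) (carrier (free_grp T))
           \<subseteq> {w \<in> carrier (free_grp T). \<forall>c. exp_sum c w = 0}"
  unfolding derived_def
proof (rule group.generate_subgroup_incl[OF group_free_grp _ subgroup_exp_sum_eq_0[OF assms]])
  show "derived_set (free_grp S) (carrier (free_grp T))
          \<subseteq> {w \<in> carrier (free_grp T). \<forall>c. exp_sum c w = 0}"
  proof
    fix x assume "x \<in> derived_set (free_grp S) (carrier (free_grp T))"
    then obtain u v where uv: "u \<in> carrier (free_grp T)" "v \<in> carrier (free_grp T)"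
      and x: "x = u \<otimes>\<^bsub>free_grp S\<^esub> v \<otimes>\<^bsub>free_grp S\<^esub> inv\<^bsub>free_grp S\<^esub> u
                   \<otimes>\<^bsub>free_grp S\<^esub> inv\<^bsub>free_grp S\<^esub> v"
      by blast
    have "u \<in> carrier (free_grp S)" "v \<in> carrier (free_grp S)"
      using uv carrier_free_grp_mono[OF assms] by auto
    then have "x = reduce (u @ v @ inv_word u @ inv_word v)"
      using x by (simp add: inv_free_grp)
    moreover have "reduce (u @ v @ inv_word u @ inv_word v) \<in> carrier (free_grp T)"
      using uv by (intro reduce_in_carrier_free_grp) (simp add: carrier_free_grp image_Un)
    ultimately show "x \<in> {w \<in> carrier (free_grp T). \<forall>c. exp_sum c w = 0}"
      by simp
  qed
qed

lemma reduce_eq_commutator_mult: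
  assumes "snd a \<in> S" and "snd ` set p \<subseteq> S"
  shows "reduce (a # p @ inv_letter a # q)
           = [a] \<otimes>\<^bsub>free_grp S\<^esub> reduce p \<otimes>\<^bsub>free_grp S\<^esub> inv\<^bsub>free_grp S\<^esub> [a]
               \<otimes>\<^bsub>free_grp S\<^esub> inv\<^bsub>free_grp S\<^esub> (reduce p) \<otimes>\<^bsub>free_grp S\<^esub> reduce (p @ q)"
proof -
  have "[a] \<in> carrier (free_grp S)" and "reduce p \<in> carrier (free_grp S)"
    using assms by (simp add: carrier_free_grp, intro reduce_in_carrier_free_grp)
  then have "[a] \<otimes>\<^bsub>free_grp S\<^esub> reduce p \<otimes>\<^bsub>free_grp S\<^esub> inv\<^bsub>free_grp S\<^esub> [a]
               \<otimes>\<^bsub>free_grp S\<^esub> inv\<^bsub>free_grp S\<^esub> (reduce p) \<otimes>\<^bsub>free_grp S\<^esub> reduce (p @ q)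
               = reduce ((a # p @ [inv_letter a]) @ inv_word p @ p @ q)"
    by (simp add: inv_free_grp)
  also have "\<dots> = reduce ((a # p @ [inv_letter a]) @ reduce (inv_word p @ p @ q))"
    by (simp only: reduce_append_reduce_right)
  also have "\<dots> = reduce ((a # p @ [inv_letter a]) @ q)"
    by (simp only: reduce_inv_word_cancel_left reduce_append_reduce_right)
  finally show ?thesis
    by simp
qed

lemma reduce_in_derived_free_grp:
  assumes "T \<subseteq> S"
  shows "snd ` set w \<subseteq> T \<Longrightarrow> \<forall>c. exp_sum c w = 0
           \<Longrightarrow> reduce w \<in> derived (free_grp S) (carrier (free_grp T))"
proof (induction "length w" arbitrary: w rule: less_induct)
  case less
  let ?D = "derived (free_grp S) (carrier (free_grp T))"
  have D: "subgroup ?D (free_grp S)"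
    using group.derived_is_subgroup[OF group_free_grp carrier_free_grp_mono[OF assms]] .
  show ?case
  proof (cases w)
    case Nil
    then show ?thesis
      using subgroup.one_closed[OF D] by simp
  next
    case (Cons a w')
    \<comment> \<open>The first letter is cancelled in exponent by a later inverse letter, w = a p a\<inverse> q,
      and then w = [a, p] \<cdot> p q with p q shorter than w.\<close>
    have "inv_letter a \<in> set w'"
      using exp_sum_Cons_neq_0[of a w'] less.prems(2) Cons by blast
    then obtain p q where w': "w' = p @ inv_letter a # q"
      by (meson split_list)
    have "[a] \<in> carrier (free_grp T)" and "reduce p \<in> carrier (free_grp T)"
      using less.prems(1) Cons w'
      by (simp add: carrier_free_grp, intro reduce_in_carrier_free_grp) auto
    then have "[a] \<otimes>\<^bsub>free_grp S\<^esub> reduce p \<otimes>\<^bsub>free_grp S\<^esub> inv\<^bsub>free_grp S\<^esub> [a]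
                 \<otimes>\<^bsub>free_grp S\<^esub> inv\<^bsub>free_grp S\<^esub> (reduce p) \<in> ?D"
      unfolding derived_def by (blast intro: generate.incl)
    moreover have "reduce (p @ q) \<in> ?D"
    proof (rule less.hyps)
      have "exp_sum c w = exp_sum c (p @ q)" for c
        using Cons w' by (auto simp: inv_letter_def)
      then show "\<forall>c. exp_sum c (p @ q) = 0"
        using less.prems(2) by simp
    qed (use less.prems(1) Cons w' in auto)
    moreover have "reduce w = [a] \<otimes>\<^bsub>free_grp S\<^esub> reduce p \<otimes>\<^bsub>free_grp S\<^esub> inv\<^bsub>free_grp S\<^esub> [a]
                     \<otimes>\<^bsub>free_grp S\<^esub> inv\<^bsub>free_grp S\<^esub> (reduce p) \<otimes>\<^bsub>free_grp S\<^esub> reduce (p @ q)"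
      unfolding Cons w' by (intro reduce_eq_commutator_mult) (use less.prems(1) Cons w' assms in auto)
    ultimately show ?thesis
      using subgroup.m_closed[OF D] by metis
  qed
qed

lemma derived_free_grp:
  assumes "T \<subseteq> S"
  shows "derived (free_grp S) (carrier (free_grp T))
           = {w \<in> carrier (free_grp T). \<forall>c. exp_sum c w = 0}"
proof
  show "{w \<in> carrier (free_grp T). \<forall>c. exp_sum c w = 0} \<subseteq> derived (free_grp S) (carrier (free_grp T))"
    using reduce_in_derived_free_grp[OF assms] by (force simp: carrier_free_grp reduce_reduced)
qed (rule derived_free_grp_subset[OF assms])

lemma reduce_concat_map_reduce:
  assumes f_inv: "\<And>a. f (inv_letter a) = inv_word (f a)"
  shows "reduce (concat (map f (reduce w))) = reduce (concat (map f w))"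
proof (induction w)
  case (Cons a w)
  have "reduce (concat (map f (cons_red a u))) = reduce (f a @ concat (map f u))" for u
    by (cases u) (auto simp: cons_red_Cons f_inv)
  then have "reduce (concat (map f (reduce (a # w))))
               = reduce (f a @ reduce (concat (map f (reduce w))))"
    by (simp add: reduce_Cons)
  then show ?case
    using Cons.IH by simp
qed simp

lemma reduced_map_apsnd:
  "reduced w \<Longrightarrow> inj_on \<phi> (snd ` set w) \<Longrightarrow> reduced (map (apsnd \<phi>) w)"
proof (induction w rule: reduced.induct)
  case (3 a b w)
  then have "apsnd \<phi> b \<noteq> inv_letter (apsnd \<phi> a)"
    by (auto simp: reduced_Cons_Cons inv_letter_def prod_eq_iff inj_on_def)
  with 3 show ?case
    by (auto simp: reduced_Cons_Cons)
qed simp_all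

lemma inj_on_apsnd: "inj_on \<phi> (snd ` A) \<Longrightarrow> inj_on (apsnd \<phi>) A"
  by (auto simp: inj_on_def prod_eq_iff)

lemma exp_sum_map_apsnd:
  "inj_on \<phi> (insert c (snd ` set w)) \<Longrightarrow> exp_sum (\<phi> c) (map (apsnd \<phi>) w) = exp_sum c w"
  by (induction w) (auto simp: inj_on_def)

lemma subst_a_eq_map_apsnd: "subst_a w = map (apsnd snd) w"
  by (auto simp: subst_a_def)

lemma subst_a_Nil [simp]: "subst_a [] = []"
  by (simp add: subst_a_def)

lemma subst_a_append [simp]: "subst_a (u @ v) = subst_a u @ subst_a v"
  by (simp add: subst_a_def)

lemma subst_a_concat [simp]: "subst_a (concat ws) = concat (map subst_a ws)"
  by (induction ws) (simp_all add: subst_a_def)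

lemma subst_a_map_apsnd [simp]: "subst_a (map (apsnd (\<lambda>j. (f j, j))) w) = w"
  by (induction w) (auto simp: subst_a_def)

lemma snd_set_subst_a [simp]: "snd ` set (subst_a w) = snd ` snd ` set w"
  by (force simp: subst_a_eq_map_apsnd)

lemma reduced_subst_a: "reduced w \<Longrightarrow> inj_on snd (snd ` set w) \<Longrightarrow> reduced (subst_a w)"
  by (simp add: subst_a_eq_map_apsnd reduced_map_apsnd)

lemma subst_a_inj_on:
  assumes "snd ` set u \<subseteq> A" "snd ` set v \<subseteq> A" "inj_on snd A" "subst_a u = subst_a v"
  shows "u = v"
proof -
  have "inj_on (apsnd snd) (set u \<union> set v)"
    using assms(1-3) by (intro inj_on_apsnd) (simp add: image_Un inj_on_subset)
  then show ?thesis
    using assms(4) by (simp add: subst_a_eq_map_apsnd inj_on_map_eq_map)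
qed

lemma exp_sum_subst_a:
  "\<forall>a\<in>set w. fst (snd a) = i \<Longrightarrow> exp_sum j (subst_a w) = exp_sum (i, j) w"
  by (induction w) (auto simp: subst_a_def)

section \<open>The components of the natural map\<close>

lemma letter_comp_inv_letter: "letter_comp n \<beta> (inv_letter a) = inv_word (letter_comp n \<beta> a)"
  by (simp add: letter_comp_def inv_letter_def split: prod.splits)

lemma nat_map_reduce [simp]: "nat_map n (reduce w) = nat_map n w"
  by (simp add: nat_map_def reduce_concat_map_reduce letter_comp_inv_letter)

lemma inj_on_snd_X_alpha: "inj_on snd (X_alpha r i)"
  by (auto simp: X_alpha_def inj_on_def)

lemma nat_map_append: "nat_map n (u @ v) \<beta> = reduce (nat_map n u \<beta> @ nat_map n v \<beta>)"
  by (simp add: nat_map_def)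

lemma nat_map_component:
  assumes "i \<noteq> n"
  shows "nat_map n w i = reduce (subst_a (filter (\<lambda>a. fst (snd a) = i) w))"
proof -
  have "concat (map (letter_comp n i) w) = subst_a (filter (\<lambda>a. fst (snd a) = i) w)"
    using assms by (induction w) (auto simp: letter_comp_def subst_a_def split: prod.splits)
  then show ?thesis
    by (simp add: nat_map_def)
qed

lemma nat_map_last_component:
  assumes "\<forall>a\<in>set w. fst (snd a) \<noteq> n"
  shows "nat_map n w n = reduce (map inv_letter (subst_a w))"
proof -
  have "concat (map (letter_comp n n) w) = map inv_letter (subst_a w)"
    using assms
    by (induction w) (auto simp: letter_comp_def subst_a_def inv_letter_def split: prod.splits)
  then show ?thesis
    by (simp add: nat_map_def)
qed

lemma nat_map_Delta_component:
  assumes "wD \<in> carrier (free_grp (Delta_set r))" and "\<forall>c. exp_sum c wD = 0" and "i \<noteq> n"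
  shows "nat_map n wD i = []"
proof -
  let ?v = "filter (\<lambda>a. fst (snd a) = i) wD"
  have "snd ` set ?v \<subseteq> {(i, i)}"
    using assms(1) by (auto simp: carrier_free_grp Delta_set_def)
  moreover have "exp_sum i (subst_a ?v) = exp_sum (i, i) wD"
    using exp_sum_subst_a[of ?v i i] exp_sum_filter[of wD "(i, i)"] by auto
  ultimately have "reduce (subst_a ?v) = []"
    using assms(2) by (intro reduce_eq_Nil_single_generator) auto
  then show ?thesis
    using assms(3) by (simp add: nat_map_component)
qed

lemma concat_map_if_eq:
  "distinct xs \<Longrightarrow> i \<in> set xs \<Longrightarrow> concat (map (\<lambda>k. if k = i then f k else []) xs) = f i"
  by (induction xs) auto

lemma nat_map_factors_component:
  assumes ws: "\<And>k. k \<in> {1..n-1} \<Longrightarrow> ws k \<in> carrier (free_grp (X_alpha r k))"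
    and i: "i \<in> {1..n-1}"
  shows "nat_map n (concat (map ws [1..<n])) i = subst_a (ws i)"
proof -
  let ?P = "\<lambda>a. fst (snd a) = i"
  have "filter ?P (ws k) = (if k = i then ws k else [])" if "k \<in> set [1..<n]" for k
  proof -
    have "ws k \<in> carrier (free_grp (X_alpha r k))"
      using ws that by auto
    then have "\<forall>a\<in>set (ws k). fst (snd a) = k"
      by (auto simp: carrier_free_grp X_alpha_def)
    then show ?thesis
      by (auto intro: filter_True filter_False)
  qed
  then have "filter ?P (concat (map ws [1..<n]))
               = concat (map (\<lambda>k. if k = i then ws k else []) [1..<n])"
    unfolding filter_concat map_map by (intro arg_cong[where f = concat] map_cong) simp_all
  moreover have "i \<in> set [1..<n]" and "i \<noteq> n"
    using i by auto
  ultimately have "nat_map n (concat (map ws [1..<n])) i = reduce (subst_a (ws i))"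
    by (simp add: nat_map_component concat_map_if_eq)
  moreover have "reduced (ws i)" and "snd ` set (ws i) \<subseteq> X_alpha r i"
    using ws[OF i] by (simp_all add: carrier_free_grp)
  then have "reduced (subst_a (ws i))"
    using inj_on_subset[OF inj_on_snd_X_alpha] reduced_subst_a by blast
  ultimately show ?thesis
    by (simp add: reduce_reduced)
qed

section \<open>Factorizations through the diagonal\<close>

lemma Delta_set_subset_X_set: "r < n \<Longrightarrow> Delta_set r \<subseteq> X_set n r"
  by (auto simp: Delta_set_def X_set_def)

lemma derived_FX:
  "r < n \<Longrightarrow> derived (FX n r) (carrier (free_grp (Delta_set r)))
                = {w \<in> carrier (free_grp (Delta_set r)). \<forall>c. exp_sum c w = 0}"
  by (simp add: FX_def derived_free_grp Delta_set_subset_X_set)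

definition delta_factorization ::
    "nat \<Rightarrow> nat \<Rightarrow> (nat \<times> nat) word \<Rightarrow> (nat \<times> nat) word \<Rightarrow> (nat \<Rightarrow> (nat \<times> nat) word) \<Rightarrow> bool"
  where
  "delta_factorization n r w wD ws \<longleftrightarrow>
     wD \<in> derived (FX n r) (carrier (free_grp (Delta_set r))) \<and>
     (\<forall>i\<in>{1..n-1}. ws i \<in> carrier (free_grp (X_alpha r i))) \<and>
     w = wD \<otimes>\<^bsub>FX n r\<^esub> ord_prod (FX n r) (map ws [1..<n])"

lemma delta_factorizationD:
  assumes "r < n" and "delta_factorization n r w wD ws"
  shows "wD \<in> carrier (free_grp (Delta_set r))" and "\<forall>c. exp_sum c wD = 0"
    and "\<And>i. i \<in> {1..n-1} \<Longrightarrow> ws i \<in> carrier (free_grp (X_alpha r i))"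
    and "w = reduce (wD @ concat (map ws [1..<n]))"
  using assms(2) unfolding delta_factorization_def derived_FX[OF assms(1)]
  by (auto simp: FX_def ord_prod_free_grp)

lemma delta_factorization_letters:
  assumes "r < n" and "delta_factorization n r w wD ws"
  shows "snd ` set (wD @ concat (map ws [1..<n])) \<subseteq> X_set n r"
proof -
  have "snd ` set wD \<subseteq> X_set n r"
    using delta_factorizationD(1)[OF assms] Delta_set_subset_X_set[OF assms(1)]
    by (auto simp: carrier_free_grp)
  moreover have "snd ` set (ws k) \<subseteq> X_set n r" if "k \<in> {1..n-1}" for k
    using delta_factorizationD(3)[OF assms that] that
    by (auto simp: carrier_free_grp X_alpha_def X_set_def)
  ultimately show ?thesis
    by fastforce
qed

lemma delta_factorization_in_carrier:
  "r < n \<Longrightarrow> delta_factorization n r w wD ws \<Longrightarrow> w \<in> carrier (FX n r)"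
  by (metis FX_def delta_factorizationD(4) delta_factorization_letters reduce_in_carrier_free_grp)

lemma delta_factorization_component:
  assumes "r < n" and fact: "delta_factorization n r w wD ws" and i: "i \<in> {1..n-1}"
  shows "nat_map n w i = subst_a (ws i)"
proof -
  let ?C = "concat (map ws [1..<n])"
  have "i \<noteq> n"
    using i by auto
  then have "nat_map n wD i = []"
    using delta_factorizationD(1,2)[OF assms(1) fact] by (intro nat_map_Delta_component)
  then have "nat_map n w i = reduce (nat_map n ?C i)"
    by (simp add: delta_factorizationD(4)[OF assms(1) fact] nat_map_append)
  also have "\<dots> = nat_map n ?C i"
    by (simp add: nat_map_def)
  also have "\<dots> = subst_a (ws i)"
    using delta_factorizationD(3)[OF assms(1) fact] i by (rule nat_map_factors_component)
  finally show ?thesis .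
qed

lemma delta_factorization_last_component:
  assumes "r < n" and "delta_factorization n r w wD ws"
  shows "nat_map n w n
           = reduce (map inv_letter (subst_a wD) @ map inv_letter (subst_a (concat (map ws [1..<n]))))"
proof -
  have "\<forall>a\<in>set (wD @ concat (map ws [1..<n])). fst (snd a) \<noteq> n"
    using delta_factorization_letters[OF assms] by (fastforce simp: X_set_def)
  then show ?thesis
    by (simp add: delta_factorizationD(4)[OF assms] nat_map_last_component)
qed

lemma delta_factorization_outer_component:
  assumes "r < n" and "delta_factorization n r w wD ws" and k: "k \<notin> {1..n}"
  shows "nat_map n w k = []"
proof -
  have "fst (snd a) \<noteq> k" if "a \<in> set (wD @ concat (map ws [1..<n]))" for a
  proof -
    have "snd a \<in> X_set n r"
      using delta_factorization_letters[OF assms(1,2)] that by blast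
    then show ?thesis
      using k by (auto simp: X_set_def)
  qed
  then have "filter (\<lambda>a. fst (snd a) = k) (wD @ concat (map ws [1..<n])) = []"
    by (intro filter_False) blast
  moreover have "k \<noteq> n"
    using k assms(1) by auto
  ultimately show ?thesis
    by (simp add: delta_factorizationD(4)[OF assms(1,2)] nat_map_component)
qed

lemma inj_on_snd_Delta_set: "inj_on snd (Delta_set r)"
  by (auto simp: Delta_set_def inj_on_def)

lemma delta_factorization_unique:
  assumes "r < n"
    and fact: "delta_factorization n r w wD ws" and fact': "delta_factorization n r w' wD' ws'"
    and same_image: "nat_map n w = nat_map n w'"
  shows "w = w'"
proof -
  have "ws i = ws' i" if i: "i \<in> {1..n-1}" for i
  proof (rule subst_a_inj_on[where A = "X_alpha r i"])
    show "subst_a (ws i) = subst_a (ws' i)"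
      using same_image delta_factorization_component[OF assms(1) fact i]
        delta_factorization_component[OF assms(1) fact' i] by simp
  qed (use delta_factorizationD(3)[OF assms(1) fact i] delta_factorizationD(3)[OF assms(1) fact' i]
        inj_on_snd_X_alpha in \<open>simp_all add: carrier_free_grp\<close>)
  then have ws: "map ws [1..<n] = map ws' [1..<n]"
    by (intro map_cong) auto
  have "reduce (map inv_letter (subst_a wD)) = reduce (map inv_letter (subst_a wD'))"
    using same_image ws delta_factorization_last_component[OF assms(1) fact]
      delta_factorization_last_component[OF assms(1) fact']
    by (metis reduce_append_cancel_right)
  moreover have "reduced (map inv_letter (subst_a v))" if "v \<in> carrier (free_grp (Delta_set r))" for v
  proof -
    have "reduced v" and "snd ` set v \<subseteq> Delta_set r"
      using that by (simp_all add: carrier_free_grp)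
    then show ?thesis
      using inj_on_subset[OF inj_on_snd_Delta_set] reduced_subst_a by simp
  qed
  ultimately have "subst_a wD = subst_a wD'"
    using delta_factorizationD(1)[OF assms(1)] fact fact'
    by (simp add: reduce_reduced inj_map_eq_map[OF inj_inv_letter])
  then have "wD = wD'"
    using delta_factorizationD(1)[OF assms(1)] fact fact' inj_on_snd_Delta_set
    by (intro subst_a_inj_on[where A = "Delta_set r"]) (simp_all add: carrier_free_grp)
  then show ?thesis
    using ws delta_factorizationD(4)[OF assms(1)] fact fact' by metis
qed

lemma K_set_psi_eq_0:
  assumes "g \<in> K_set n r"
  shows "psi n g j = 0"
proof (cases "j \<in> {1..r}")
  case False
  have "exp_sum j (g \<alpha>) = 0" if "\<alpha> \<in> {1..n}" for \<alpha>
  proof (rule exp_sum_eq_0_if_notin)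
    have "snd ` set (g \<alpha>) \<subseteq> {1..r}"
      using assms that by (simp add: K_set_def prod_elem_def carrier_free_grp)
    then show "j \<notin> snd ` set (g \<alpha>)"
      using False by blast
  qed
  then show ?thesis
    by (simp add: psi_def)
qed (use assms in \<open>simp add: K_set_def\<close>)

lemma psi_eq_exp_sum_concat: "psi n g j = exp_sum j (concat (map g [1..<Suc n]))"
proof -
  have "psi n g j = (\<Sum>\<alpha>\<in>set [1..<Suc n]. exp_sum j (g \<alpha>))"
    by (simp add: psi_def atLeastLessThanSuc_atLeastAtMost del: upt_Suc)
  then show ?thesis
    by (simp add: exp_sum_concat sum_list_distinct_conv_sum_set comp_def del: upt_Suc)
qed

lemma map_apsnd_Pair_in_X_alpha:
  assumes "v \<in> carrier (free_grp {1..r})"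
  shows "map (apsnd (Pair i)) v \<in> carrier (free_grp (X_alpha r i))"
proof -
  have "reduced v" and letters: "snd ` set v \<subseteq> {1..r}"
    using assms by (simp_all add: carrier_free_grp)
  then have "reduced (map (apsnd (Pair i)) v)"
    by (intro reduced_map_apsnd) (simp_all add: inj_on_def)
  moreover have "snd ` set (map (apsnd (Pair i)) v) \<subseteq> X_alpha r i"
    using letters by (force simp: X_alpha_def)
  ultimately show ?thesis
    by (simp add: carrier_free_grp)
qed

lemma map_apsnd_diagonal_in_derived:
  assumes "r < n" and "u \<in> carrier (free_grp {1..r})" and u_exp: "\<forall>j. exp_sum j u = 0"
  shows "map (apsnd (\<lambda>j. (j, j))) u \<in> derived (FX n r) (carrier (free_grp (Delta_set r)))"
proof -
  let ?wD = "map (apsnd (\<lambda>j. (j, j))) u"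
  have "reduced u" and letters: "snd ` set u \<subseteq> {1..r}"
    using assms(2) by (simp_all add: carrier_free_grp)
  then have "reduced ?wD"
    by (intro reduced_map_apsnd) (simp_all add: inj_on_def)
  moreover have "snd ` set ?wD \<subseteq> Delta_set r"
    using letters by (force simp: Delta_set_def)
  moreover have "exp_sum c ?wD = 0" for c
  proof (cases "fst c = snd c")
    case True
    then obtain j where "c = (j, j)"
      by (metis prod.collapse)
    then show ?thesis
      using exp_sum_map_apsnd[of "\<lambda>j. (j, j)" j u] u_exp by (simp add: inj_on_def)
  next
    case False
    then show ?thesis
      by (intro exp_sum_eq_0_if_notin) auto
  qed
  ultimately show ?thesis
    by (simp add: derived_FX[OF assms(1)] carrier_free_grp)
qed

lemma K_set_carrier: "g \<in> K_set n r \<Longrightarrow> k \<in> {1..n} \<Longrightarrow> g k \<in> carrier (free_grp {1..r})"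
  by (simp add: K_set_def prod_elem_def)

lemma K_set_correction_word:
  assumes "r < n" and g: "g \<in> K_set n r"
    and v: "v = reduce (g n @ inv_word (map inv_letter (concat (map g [1..<n]))))"
  shows "map inv_letter v \<in> carrier (free_grp {1..r})"
    and "exp_sum j (map inv_letter v) = 0"
proof -
  have letters: "snd ` set (g k) \<subseteq> {1..r}" if "k \<in> {1..n}" for k
    using K_set_carrier[OF g that] by (simp add: carrier_free_grp)
  then have "snd ` set (concat (map g [1..<n])) \<subseteq> {1..r}"
    by force
  then have "snd ` set (g n @ inv_word (map inv_letter (concat (map g [1..<n])))) \<subseteq> {1..r}"
    using letters[of n] assms(1) by (simp add: image_Un image_image)
  then have "snd ` set v \<subseteq> {1..r}"
    unfolding v by (meson image_mono order_trans set_reduce_subset)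
  then show "map inv_letter v \<in> carrier (free_grp {1..r})"
    by (simp add: v carrier_free_grp image_image)
  show "exp_sum j (map inv_letter v) = 0"
    using K_set_psi_eq_0[OF g, of j] assms(1) by (simp add: psi_eq_exp_sum_concat v)
qed

lemma delta_factorization_exists:
  assumes "r < n" and g: "g \<in> K_set n r"
  shows "\<exists>w wD ws. nat_map n w = g \<and> delta_factorization n r w wD ws"
proof -
  define C where "C = map inv_letter (concat (map g [1..<n]))"
  \<comment> \<open>v is chosen so that the n-th component v C of the image reduces to g n.\<close>
  define v where "v = reduce (g n @ inv_word C)"
  define u where "u = map inv_letter v"
  define ws where "ws k = map (apsnd (Pair k)) (g k)" for k
  define wD where "wD = map (apsnd (\<lambda>j. (j, j))) u"
  define w where "w = reduce (wD @ concat (map ws [1..<n]))"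
  have "u \<in> carrier (free_grp {1..r})" and "exp_sum j u = 0" for j
    using K_set_correction_word[OF assms v_def[unfolded C_def]] by (simp_all add: u_def)
  then have "wD \<in> derived (FX n r) (carrier (free_grp (Delta_set r)))"
    unfolding wD_def using assms(1) by (intro map_apsnd_diagonal_in_derived) auto
  moreover have "ws i \<in> carrier (free_grp (X_alpha r i))" if "i \<in> {1..n-1}" for i
    unfolding ws_def using that by (intro map_apsnd_Pair_in_X_alpha K_set_carrier[OF g]) auto
  ultimately have fact: "delta_factorization n r w wD ws"
    by (simp add: delta_factorization_def w_def FX_def ord_prod_free_grp)
  have "nat_map n w k = g k" for k
  proof -
    consider "k \<in> {1..n-1}" | "k = n" | "k \<notin> {1..n}"
      by force
    then show ?thesis
    proof cases
      case 1
      then show ?thesis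
        using delta_factorization_component[OF assms(1) fact 1] by (simp add: ws_def)
    next
      case 2
      have "subst_a wD = u"
        by (simp add: wD_def)
      then have "nat_map n w n = reduce (v @ C)"
        using delta_factorization_last_component[OF assms(1) fact]
        by (simp add: u_def ws_def C_def comp_def)
      also have "\<dots> = g n"
        using K_set_carrier[OF g, of n] assms(1) by (simp add: v_def carrier_free_grp reduce_reduced)
      finally show ?thesis
        using 2 by simp
    next
      case 3
      then show ?thesis
        using delta_factorization_outer_component[OF assms(1) fact] g
        by (simp add: K_set_def prod_elem_def)
    qed
  qed
  then show ?thesis
    using fact by blast
qed

theorem lemma3p6:
  fixes n r :: nat and g :: "nat \<Rightarrow> nat word"
  assumes "n \<ge> r + 2"
    and "g \<in> K_set n r"
  shows "(\<exists>!w. w \<in> carrier (FX n r) \<and> nat_map n w = g \<and>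
            (\<exists>wD ws. wD \<in> derived (FX n r) (carrier (free_grp (Delta_set r))) \<and>
                     (\<forall>i\<in>{1..n-1}. ws i \<in> carrier (free_grp (X_alpha r i))) \<and>
                     w = wD \<otimes>\<^bsub>FX n r\<^esub> ord_prod (FX n r) (map ws [1..<n])))
       \<and> (\<forall>w wD ws. w \<in> carrier (FX n r) \<and> nat_map n w = g \<and>
            wD \<in> derived (FX n r) (carrier (free_grp (Delta_set r))) \<and>
            (\<forall>i\<in>{1..n-1}. ws i \<in> carrier (free_grp (X_alpha r i))) \<and>
            w = wD \<otimes>\<^bsub>FX n r\<^esub> ord_prod (FX n r) (map ws [1..<n])
            \<longrightarrow> (\<forall>i\<in>{1..n-1}. subst_a (ws i) = g i))"
proof -
  have "r < n"
    using assms(1) by simp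
  obtain w0 wD0 ws0 where w0: "nat_map n w0 = g" "delta_factorization n r w0 wD0 ws0"
    using delta_factorization_exists[OF \<open>r < n\<close> assms(2)] by blast
  have "\<exists>!w. w \<in> carrier (FX n r) \<and> nat_map n w = g \<and> (\<exists>wD ws. delta_factorization n r w wD ws)"
  proof (rule ex1I)
    show "w0 \<in> carrier (FX n r) \<and> nat_map n w0 = g \<and> (\<exists>wD ws. delta_factorization n r w0 wD ws)"
      using w0 delta_factorization_in_carrier[OF \<open>r < n\<close>] by blast
  next
    fix w
    assume "w \<in> carrier (FX n r) \<and> nat_map n w = g \<and> (\<exists>wD ws. delta_factorization n r w wD ws)"
    then show "w = w0"
      using w0 delta_factorization_unique[OF \<open>r < n\<close>] by metis
  qed
  moreover have "\<forall>w wD ws. w \<in> carrier (FX n r) \<and> nat_map n w = g \<and> delta_factorization n r w wD ws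
                   \<longrightarrow> (\<forall>i\<in>{1..n-1}. subst_a (ws i) = g i)"
    using delta_factorization_component[OF \<open>r < n\<close>] by metis
  ultimately show ?thesis
    unfolding delta_factorization_def by blast
qed

end
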